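(* Let $\hookrightarrow$ and $\simeq$ be as in the context. Then: (1) $\hookrightarrow$ is confluent; (2) for all terms $M, N, N'$, if $M \simeq N$ and $N \hookrightarrow N'$, then there is a term $M'$ with $M \hookrightarrow M'$ and $M' \simeq N'$; (3) for all terms $M, N$, if $M \equiv N$ then there are terms $M', N'$ with $M \hookrightarrow^* M'$, $N \hookrightarrow^* N'$ and $M' \simeq N'$.
   Context: Terms are given by $M, N, A, B ::= x \mid c \mid M\,N \mid \lambda x : A.\,M \mid \Pi x : A.\,B \mid \mathbf{Type} \mid \mathbf{Kind}$, with $x$ ranging over variables and $c$ over constants. The constants include $Level, \mathtt{z}, \mathtt{s}, \sqcup$ (written infix), $U, El, u, \pi$. Level expressions are terms generated by $l ::= i \mid \mathtt{z} \mid \mathtt{s}\,l \mid l \sqcup l'$ where $i$ ranges over a distinguished infinite set $\mathcal{I}$ of level variables; level variables may only be substituted by level expressions. Fix a signature containing definitions $c : A := M$. The one-step reduction $\hookrightarrow$ is the closure under contexts (and, for the rewrite rules, substitutions) of: $\beta$-reduction $(\lambda x : A.\,M)\,N \hookrightarrow M\{N/x\}$; the rewrite rules $El~i'~(u~i) \hookrightarrow U~i$ and $El~i'~(\pi~i_A~i_B~A~B) \hookrightarrow \Pi x : El~i_A~A.\, El~i_B~(B~x)$; and $\delta$-rules $c \hookrightarrow M$ for each definition $c : A := M$ in the signature. $\hookrightarrow^*$ is its reflexive-transitive closure. The relation $\simeq$ on terms is the smallest congruence (reflexive, symmetric, transitive, closed under all term constructors and under substitution, with level variables instantiated only by levels)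 containing the level equations $i_1 \sqcup (i_2 \sqcup i_3) \approx (i_1 \sqcup i_2) \sqcup i_3$, $i_1 \sqcup i_2 \approx i_2 \sqcup i_1$, $\mathtt{s}\,(i_1 \sqcup i_2) \approx \mathtt{s}\,i_1 \sqcup \mathtt{s}\,i_2$, $i \sqcup \mathtt{s}\,i \approx \mathtt{s}\,i$, $i \sqcup \mathtt{z} \approx i$, $i \sqcup i \approx i$. $\equiv$ is the reflexive, symmetric, transitive closure of $\hookrightarrow \cup \simeq$. *)

theory Defs
  imports Main "HOL-Library.Confluence"
begin

text \<open>Terms with de Bruijn indices.  There are two separate variable namespaces:
  ordinary variables (kind Ord) and level variables (kind Lev, the set I).
  A binder (lambda or Pi) binds index 0 of the namespace given by its kind flag.\<close>

datatype vkind = Ord | Lev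

datatype 'c const =
    CLevel | Cz | Cs | Cmax | CU | CEl | Cu | Cpi
  | CUser 'c

datatype 'c trm =
    Var vkind nat
  | Cst "'c const"
  | App "'c trm" "'c trm"
  | Lam vkind "'c trm" "'c trm"    \<comment> \<open>Lam k A M = lambda x : A. M, x of kind k\<close>
  | Pi vkind "'c trm" "'c trm"     \<comment> \<open>Pi k A B = Pi x : A. B, x of kind k\<close>
  | TypeS
  | KindS

fun lift :: "vkind \<Rightarrow> nat \<Rightarrow> 'c trm \<Rightarrow> 'c trm" where
  "lift k d (Var k' n) = (if k' = k \<and> d \<le> n then Var k' (Suc n) else Var k' n)"
| "lift k d (Cst c) = Cst c"
| "lift k d (App M N) = App (lift k d M) (lift k d N)"
| "lift k d (Lam k' A M) = Lam k' (lift k d A) (lift k (if k' = k then Suc d else d) M)"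
| "lift k d (Pi k' A M) = Pi k' (lift k d A) (lift k (if k' = k then Suc d else d) M)"
| "lift k d TypeS = TypeS"
| "lift k d KindS = KindS"

fun subst :: "vkind \<Rightarrow> nat \<Rightarrow> 'c trm \<Rightarrow> 'c trm \<Rightarrow> 'c trm" where
  "subst k d N (Var k' n) =
     (if k' = k then (if n < d then Var k' n else if n = d then N else Var k' (n - 1))
      else Var k' n)"
| "subst k d N (Cst c) = Cst c"
| "subst k d N (App M P) = App (subst k d N M) (subst k d N P)"
| "subst k d N (Lam k' A M) =
     Lam k' (subst k d N A) (subst k (if k' = k then Suc d else d) (lift k' 0 N) M)"
| "subst k d N (Pi k' A M) =
     Pi k' (subst k d N A) (subst k (if k' = k then Suc d else d) (lift k' 0 N) M)"
| "subst k d N TypeS = TypeS"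
| "subst k d N KindS = KindS"

fun fvs :: "'c trm \<Rightarrow> (vkind \<times> nat) set" where
  "fvs (Var k n) = {(k, n)}"
| "fvs (Cst c) = {}"
| "fvs (App M N) = fvs M \<union> fvs N"
| "fvs (Lam k A M) = fvs A \<union> {(k', n) | k' n. (if k' = k then (k', Suc n) else (k', n)) \<in> fvs M}"
| "fvs (Pi k A M) = fvs A \<union> {(k', n) | k' n. (if k' = k then (k', Suc n) else (k', n)) \<in> fvs M}"
| "fvs TypeS = {}"
| "fvs KindS = {}"

definition closed :: "'c trm \<Rightarrow> bool" where
  "closed M \<longleftrightarrow> fvs M = {}"

abbreviation zL :: "'c trm" where "zL \<equiv> Cst Cz"
abbreviation sL :: "'c trm \<Rightarrow> 'c trm" where "sL l \<equiv> App (Cst Cs) l"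
abbreviation maxL :: "'c trm \<Rightarrow> 'c trm \<Rightarrow> 'c trm" (infixl "\<squnion>\<^sub>L" 65) where
  "l \<squnion>\<^sub>L l' \<equiv> App (App (Cst Cmax) l) l'"
abbreviation UT :: "'c trm \<Rightarrow> 'c trm" where "UT i \<equiv> App (Cst CU) i"
abbreviation ElT :: "'c trm \<Rightarrow> 'c trm \<Rightarrow> 'c trm" where "ElT i A \<equiv> App (App (Cst CEl) i) A"
abbreviation uT :: "'c trm \<Rightarrow> 'c trm" where "uT i \<equiv> App (Cst Cu) i"
abbreviation piT :: "'c trm \<Rightarrow> 'c trm \<Rightarrow> 'c trm \<Rightarrow> 'c trm \<Rightarrow> 'c trm" where
  "piT iA iB A B \<equiv> App (App (App (App (Cst Cpi) iA) iB) A) B"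

inductive is_level :: "'c trm \<Rightarrow> bool" where
  lv_var: "is_level (Var Lev n)"
| lv_z: "is_level zL"
| lv_s: "is_level l \<Longrightarrow> is_level (sL l)"
| lv_max: "is_level l \<Longrightarrow> is_level l' \<Longrightarrow> is_level (l \<squnion>\<^sub>L l')"

text \<open>A signature: a partial map from user constants to definitions c : A := M
  (pair (A, M)).  Definition bodies are required to be closed (see assumptions
  of the theorem).\<close>
type_synonym 'c signature = "'c \<Rightarrow> ('c trm \<times> 'c trm) option"

inductive step :: "'c signature \<Rightarrow> 'c trm \<Rightarrow> 'c trm \<Rightarrow> bool" for \<Sigma> where
  beta: "k = Ord \<or> is_level N \<Longrightarrow> step \<Sigma> (App (Lam k A M) N) (subst k 0 N M)"
| rw_u: "is_level i' \<Longrightarrow> is_level i \<Longrightarrow> step \<Sigma> (ElT i' (uT i)) (UT i)"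
| rw_pi: "is_level i' \<Longrightarrow> is_level iA \<Longrightarrow> is_level iB \<Longrightarrow>
    step \<Sigma> (ElT i' (piT iA iB A B))
      (Pi Ord (ElT iA A) (ElT (lift Ord 0 iB) (App (lift Ord 0 B) (Var Ord 0))))"
| delta: "\<Sigma> c = Some (A, M) \<Longrightarrow> step \<Sigma> (Cst (CUser c)) M"
| app1: "step \<Sigma> M M' \<Longrightarrow> step \<Sigma> (App M N) (App M' N)"
| app2: "step \<Sigma> N N' \<Longrightarrow> step \<Sigma> (App M N) (App M N')"
| lam1: "step \<Sigma> A A' \<Longrightarrow> step \<Sigma> (Lam k A M) (Lam k A' M)"
| lam2: "step \<Sigma> M M' \<Longrightarrow> step \<Sigma> (Lam k A M) (Lam k A M')"
| pi1: "step \<Sigma> A A' \<Longrightarrow> step \<Sigma> (Pi k A M) (Pi k A' M)"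
| pi2: "step \<Sigma> M M' \<Longrightarrow> step \<Sigma> (Pi k A M) (Pi k A M')"

inductive leveq :: "'c trm \<Rightarrow> 'c trm \<Rightarrow> bool" where
  ax_assoc: "is_level l1 \<Longrightarrow> is_level l2 \<Longrightarrow> is_level l3 \<Longrightarrow>
    leveq (l1 \<squnion>\<^sub>L (l2 \<squnion>\<^sub>L l3)) ((l1 \<squnion>\<^sub>L l2) \<squnion>\<^sub>L l3)"
| ax_comm: "is_level l1 \<Longrightarrow> is_level l2 \<Longrightarrow> leveq (l1 \<squnion>\<^sub>L l2) (l2 \<squnion>\<^sub>L l1)"
| ax_sdist: "is_level l1 \<Longrightarrow> is_level l2 \<Longrightarrow> leveq (sL (l1 \<squnion>\<^sub>L l2)) (sL l1 \<squnion>\<^sub>L sL l2)"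
| ax_ssub: "is_level l \<Longrightarrow> leveq (l \<squnion>\<^sub>L sL l) (sL l)"
| ax_zero: "is_level l \<Longrightarrow> leveq (l \<squnion>\<^sub>L zL) l"
| ax_idem: "is_level l \<Longrightarrow> leveq (l \<squnion>\<^sub>L l) l"
| refl: "leveq M M"
| sym: "leveq M N \<Longrightarrow> leveq N M"
| trans: "leveq M N \<Longrightarrow> leveq N P \<Longrightarrow> leveq M P"
| cong_app: "leveq M M' \<Longrightarrow> leveq N N' \<Longrightarrow> leveq (App M N) (App M' N')"
| cong_lam: "leveq A A' \<Longrightarrow> leveq M M' \<Longrightarrow> leveq (Lam k A M) (Lam k A' M')"
| cong_pi: "leveq A A' \<Longrightarrow> leveq M M' \<Longrightarrow> leveq (Pi k A M) (Pi k A' M')"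
| subst_cl: "leveq M N \<Longrightarrow> k = Ord \<or> is_level P \<Longrightarrow> leveq (subst k d P M) (subst k d P N)"

definition conv :: "'c signature \<Rightarrow> 'c trm \<Rightarrow> 'c trm \<Rightarrow> bool" where
  "conv \<Sigma> = equivclp (\<lambda>M N. step \<Sigma> M N \<or> leveq M N)"

end

theory Submission
  imports Defs
begin

text \<open>Parallel reduction lies between a step and its reflexive-transitive closure and has the
  diamond property, witnessed by the complete development; hence reduction is confluent. Since
  definitions are closed and level variables are only ever instantiated by levels, parallel
  reduction is stable under renaming and substitution, which the beta case needs.

  For the commutation, \<open>\<simeq>\<close> is characterised as the structural congruence generated by the level
  equations at level subterms. Level expressions are normal forms and no redex looks inside a level,
  so every step of a term can be mirrored on any \<open>\<simeq>\<close>-equal term. The third statement follows by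
  induction on the conversion, closing forward steps by confluence and pushing \<open>\<simeq>\<close> through
  reductions by the commutation.\<close>

lemma rtranclp_cong2:
  assumes "r\<^sup>*\<^sup>* a a'" "r\<^sup>*\<^sup>* b b'"
    and "\<And>x x' y. r x x' \<Longrightarrow> r (f x y) (f x' y)" "\<And>x y y'. r y y' \<Longrightarrow> r (f x y) (f x y')"
  shows "r\<^sup>*\<^sup>* (f a b) (f a' b')"
proof -
  have "r\<^sup>*\<^sup>* (f a b) (f a' b)"
    using assms(1) by induction (auto intro: rtranclp.rtrancl_into_rtrancl assms(3))
  also have "r\<^sup>*\<^sup>* (f a' b) (f a' b')"
    using assms(2) by induction (auto intro: rtranclp.rtrancl_into_rtrancl assms(4))
  finally show ?thesis .
qed

section \<open>Renaming and simultaneous substitution\<close>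

definition up_ren :: "vkind \<Rightarrow> (vkind \<Rightarrow> nat \<Rightarrow> nat) \<Rightarrow> vkind \<Rightarrow> nat \<Rightarrow> nat" where
  "up_ren k \<xi> k' n = (if k' = k then (case n of 0 \<Rightarrow> 0 | Suc m \<Rightarrow> Suc (\<xi> k' m)) else \<xi> k' n)"

fun ren :: "(vkind \<Rightarrow> nat \<Rightarrow> nat) \<Rightarrow> 'c trm \<Rightarrow> 'c trm" where
  "ren \<xi> (Var k n) = Var k (\<xi> k n)"
| "ren \<xi> (Cst c) = Cst c"
| "ren \<xi> (App M N) = App (ren \<xi> M) (ren \<xi> N)"
| "ren \<xi> (Lam k A M) = Lam k (ren \<xi> A) (ren (up_ren k \<xi>) M)"
| "ren \<xi> (Pi k A M) = Pi k (ren \<xi> A) (ren (up_ren k \<xi>) M)"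
| "ren \<xi> TypeS = TypeS"
| "ren \<xi> KindS = KindS"

definition up_inst :: "vkind \<Rightarrow> (vkind \<Rightarrow> nat \<Rightarrow> 'c trm) \<Rightarrow> vkind \<Rightarrow> nat \<Rightarrow> 'c trm" where
  "up_inst k \<sigma> k' n =
     (if k' = k then (case n of 0 \<Rightarrow> Var k' 0 | Suc m \<Rightarrow> lift k 0 (\<sigma> k' m)) else lift k 0 (\<sigma> k' n))"

fun inst :: "(vkind \<Rightarrow> nat \<Rightarrow> 'c trm) \<Rightarrow> 'c trm \<Rightarrow> 'c trm" where
  "inst \<sigma> (Var k n) = \<sigma> k n"
| "inst \<sigma> (Cst c) = Cst c"
| "inst \<sigma> (App M N) = App (inst \<sigma> M) (inst \<sigma> N)"
| "inst \<sigma> (Lam k A M) = Lam k (inst \<sigma> A) (inst (up_inst k \<sigma>) M)"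
| "inst \<sigma> (Pi k A M) = Pi k (inst \<sigma> A) (inst (up_inst k \<sigma>) M)"
| "inst \<sigma> TypeS = TypeS"
| "inst \<sigma> KindS = KindS"

definition shift :: "vkind \<Rightarrow> nat \<Rightarrow> vkind \<Rightarrow> nat \<Rightarrow> nat" where
  "shift k d k' n = (if k' = k \<and> d \<le> n then Suc n else n)"

definition subst_at :: "vkind \<Rightarrow> nat \<Rightarrow> 'c trm \<Rightarrow> vkind \<Rightarrow> nat \<Rightarrow> 'c trm" where
  "subst_at k d N k' n =
     (if k' = k then (if n < d then Var k' n else if n = d then N else Var k' (n - 1)) else Var k' n)"

lemma lift_eq_ren: "lift k d M = ren (shift k d) M"
proof -
  have up: "up_ren k' (shift k d) = shift k (if k' = k then Suc d else d)" for k' d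
    by (auto simp: up_ren_def shift_def fun_eq_iff split: nat.split)
  show ?thesis
    by (induction M arbitrary: d) (auto simp: up shift_def)
qed

lemma subst_eq_inst: "subst k d N M = inst (subst_at k d N) M"
proof -
  have up: "up_inst k' (subst_at k d N) = subst_at k (if k' = k then Suc d else d) (lift k' 0 N)" for k' d N
    by (auto simp: up_inst_def subst_at_def fun_eq_iff split: nat.split)
  show ?thesis
    by (induction M arbitrary: d N) (auto simp: up subst_at_def)
qed

lemma ren_ren: "ren \<xi> (ren \<zeta> M) = ren (\<lambda>k n. \<xi> k (\<zeta> k n)) M"
proof -
  have up: "(\<lambda>k' n. up_ren k \<xi> k' (up_ren k \<zeta> k' n)) = up_ren k (\<lambda>k n. \<xi> k (\<zeta> k n))" for k \<xi> \<zeta>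
    by (auto simp: up_ren_def fun_eq_iff split: nat.split)
  show ?thesis
    by (induction M arbitrary: \<xi> \<zeta>) (auto simp: up)
qed

lemma inst_ren: "inst \<sigma> (ren \<xi> M) = inst (\<lambda>k n. \<sigma> k (\<xi> k n)) M"
proof -
  have up: "(\<lambda>k' n. up_inst k \<sigma> k' (up_ren k \<xi> k' n)) = up_inst k (\<lambda>k n. \<sigma> k (\<xi> k n))" for k \<sigma> \<xi>
    by (auto simp: up_ren_def up_inst_def fun_eq_iff split: nat.split)
  show ?thesis
    by (induction M arbitrary: \<sigma> \<xi>) (auto simp: up)
qed

lemma ren_lift0: "ren (up_ren k \<xi>) (lift k 0 X) = lift k 0 (ren \<xi> X)"
proof -
  have "(\<lambda>k' n. up_ren k \<xi> k' (shift k 0 k' n)) = (\<lambda>k' n. shift k 0 k' (\<xi> k' n))"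
    by (auto simp: up_ren_def shift_def fun_eq_iff)
  then show ?thesis by (simp add: lift_eq_ren ren_ren)
qed

lemma ren_inst: "ren \<xi> (inst \<sigma> M) = inst (\<lambda>k n. ren \<xi> (\<sigma> k n)) M"
proof -
  have up: "(\<lambda>k' n. ren (up_ren k \<xi>) (up_inst k \<sigma> k' n)) = up_inst k (\<lambda>k n. ren \<xi> (\<sigma> k n))" for k \<xi> \<sigma>
    by (auto simp: up_ren_def up_inst_def fun_eq_iff ren_lift0 split: nat.split)
  show ?thesis
    by (induction M arbitrary: \<sigma> \<xi>) (auto simp: up)
qed

lemma inst_lift0: "inst (up_inst k \<sigma>) (lift k 0 X) = lift k 0 (inst \<sigma> X)"
proof -
  have "(\<lambda>k' n. up_inst k \<sigma> k' (shift k 0 k' n)) = (\<lambda>k' n. ren (shift k 0) (\<sigma> k' n))"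
    by (auto simp: up_inst_def shift_def fun_eq_iff lift_eq_ren)
  then show ?thesis by (simp add: lift_eq_ren inst_ren ren_inst)
qed

lemma inst_inst: "inst \<sigma> (inst \<tau> M) = inst (\<lambda>k n. inst \<sigma> (\<tau> k n)) M"
proof -
  have up: "(\<lambda>k' n. inst (up_inst k \<sigma>) (up_inst k \<tau> k' n)) = up_inst k (\<lambda>k n. inst \<sigma> (\<tau> k n))" for k \<sigma> \<tau>
    by (auto simp: up_inst_def fun_eq_iff inst_lift0 split: nat.split)
  show ?thesis
    by (induction M arbitrary: \<sigma> \<tau>) (auto simp: up)
qed

lemma fvs_binder:
  "fvs (Lam k A M) = fvs (Pi k A M)"
  "(k', n) \<in> fvs (Pi k A M) \<longleftrightarrow>
     (k', n) \<in> fvs A \<or> (if k' = k then (k', Suc n) \<in> fvs M else (k', n) \<in> fvs M)"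
  by auto

lemma up_inst_cong:
  assumes agree: "\<forall>(k', n) \<in> fvs (Pi k A M). \<sigma> k' n = \<sigma>' k' n"
    and free: "(k', n) \<in> fvs M"
  shows "up_inst k \<sigma> k' n = up_inst k \<sigma>' k' n"
proof (cases "k' = k")
  case True
  show ?thesis
  proof (cases n)
    case (Suc m)
    with free True have "(k, m) \<in> fvs (Pi k A M)" by (simp only: fvs_binder(2)) simp
    with agree have "\<sigma> k m = \<sigma>' k m" by fast
    with True Suc show ?thesis by (simp add: up_inst_def)
  qed (simp add: up_inst_def True)
next
  case False
  with free have "(k', n) \<in> fvs (Pi k A M)" by (simp only: fvs_binder(2)) simp
  with agree have "\<sigma> k' n = \<sigma>' k' n" by fast
  with False show ?thesis by (simp add: up_inst_def)
qed

lemma inst_cong: "\<forall>(k, n) \<in> fvs M. \<sigma> k n = \<sigma>' k n \<Longrightarrow> inst \<sigma> M = inst \<sigma>' M"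
proof (induction M arbitrary: \<sigma> \<sigma>')
  case (Lam k A M)
  have "\<forall>(k', n) \<in> fvs M. up_inst k \<sigma> k' n = up_inst k \<sigma>' k' n"
    using Lam.prems up_inst_cong[of k A M \<sigma> \<sigma>'] unfolding fvs_binder(1) by blast
  with Lam show ?case by simp
next
  case (Pi k A M)
  have "\<forall>(k', n) \<in> fvs M. up_inst k \<sigma> k' n = up_inst k \<sigma>' k' n"
    using Pi.prems up_inst_cong[of k A M \<sigma> \<sigma>'] by blast
  with Pi show ?case by simp
qed auto

lemma inst_Var: "inst (\<lambda>k n. Var k n) M = M"
proof -
  have up: "up_inst k (\<lambda>k n. Var k n) = (\<lambda>k n. Var k n)" for k :: vkind
    by (auto simp: up_inst_def fun_eq_iff split: nat.split)
  show ?thesis by (induction M) (auto simp: up)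
qed

lemma closed_inst: "closed M \<Longrightarrow> inst \<sigma> M = M"
  using inst_cong[of M \<sigma> "\<lambda>k n. Var k n"] by (simp add: closed_def inst_Var)

lemma closed_ren: "closed M \<Longrightarrow> ren \<xi> M = M"
  using inst_ren[of "\<lambda>k n. Var k n" \<xi> M] by (simp add: closed_inst inst_Var)

lemma subst_lift0: "subst k 0 N (lift k 0 M) = M"
proof -
  have "(\<lambda>k' n. subst_at k 0 N k' (shift k 0 k' n)) = (\<lambda>k n. Var k n)"
    by (auto simp: subst_at_def shift_def fun_eq_iff)
  then show ?thesis by (simp add: subst_eq_inst lift_eq_ren inst_ren inst_Var)
qed

lemma inst_subst0: "inst \<sigma> (subst k 0 N M) = subst k 0 (inst \<sigma> N) (inst (up_inst k \<sigma>) M)"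
proof -
  have "(\<lambda>k' n. inst \<sigma> (subst_at k 0 N k' n)) =
        (\<lambda>k' n. inst (subst_at k 0 (inst \<sigma> N)) (up_inst k \<sigma> k' n))"
    by (auto simp: subst_at_def up_inst_def fun_eq_iff subst_lift0[unfolded subst_eq_inst]
             split: nat.split)
  then show ?thesis by (simp add: subst_eq_inst inst_inst)
qed

lemma ren_subst0: "ren \<xi> (subst k 0 N M) = subst k 0 (ren \<xi> N) (ren (up_ren k \<xi>) M)"
proof -
  have ren_eq_inst: "ren \<zeta> X = inst (\<lambda>k n. Var k (\<zeta> k n)) X" for \<zeta> and X :: "'c trm"
    using inst_ren[of "\<lambda>k n. Var k n" \<zeta> X] by (simp add: inst_Var)
  have up: "up_inst k (\<lambda>k n. Var k (\<xi> k n)) = (\<lambda>k' n. Var k' (up_ren k \<xi> k' n))"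
    by (auto simp: up_inst_def up_ren_def fun_eq_iff split: nat.split)
  show ?thesis
    unfolding ren_eq_inst inst_subst0 up ..
qed

lemma lift_subst:
  "lift k d (subst k0 d0 P M) =
   subst k0 (if k = k0 \<and> d \<le> d0 then Suc d0 else d0) (lift k d P)
     (lift k (if k = k0 \<and> d0 < d then Suc d else d) M)"
proof -
  have "(\<lambda>k' n. ren (shift k d) (subst_at k0 d0 P k' n)) =
        (\<lambda>k' n. subst_at k0 (if k = k0 \<and> d \<le> d0 then Suc d0 else d0) (lift k d P) k'
                  (shift k (if k = k0 \<and> d0 < d then Suc d else d) k' n))"
    by (auto simp: subst_at_def shift_def fun_eq_iff lift_eq_ren)
  then show ?thesis by (simp add: subst_eq_inst lift_eq_ren ren_inst inst_ren)
qed

inductive_simps is_level_simps [simp]: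
  "is_level (Var k n)" "is_level (Cst c)" "is_level (App M N)"
  "is_level (Lam k A B)" "is_level (Pi k A B)" "is_level TypeS" "is_level KindS"

lemma is_level_ren: "is_level l \<Longrightarrow> is_level (ren \<xi> l)"
  by (induction rule: is_level.induct) auto

lemma is_level_lift: "is_level l \<Longrightarrow> is_level (lift k d l)"
  by (simp add: lift_eq_ren is_level_ren)

definition respects_levels :: "(vkind \<Rightarrow> nat \<Rightarrow> 'c trm) \<Rightarrow> bool" where
  "respects_levels \<sigma> \<longleftrightarrow> (\<forall>n. is_level (\<sigma> Lev n))"

lemma is_level_inst: "is_level l \<Longrightarrow> respects_levels \<sigma> \<Longrightarrow> is_level (inst \<sigma> l)"
  by (induction rule: is_level.induct) (auto simp: respects_levels_def)

lemma respects_levels_subst_at: "k = Ord \<or> is_level P \<Longrightarrow> respects_levels (subst_at k d P)"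
  by (auto simp: respects_levels_def subst_at_def)

lemma respects_levels_up_inst: "respects_levels \<sigma> \<Longrightarrow> respects_levels (up_inst k \<sigma>)"
  by (auto simp: respects_levels_def up_inst_def is_level_lift split: nat.split)

lemma is_level_subst: "is_level l \<Longrightarrow> k = Ord \<or> is_level P \<Longrightarrow> is_level (subst k d P l)"
  by (simp add: subst_eq_inst is_level_inst respects_levels_subst_at)

lemma inst_level_cong: "is_level l \<Longrightarrow> (\<And>n. \<sigma> Lev n = \<sigma>' Lev n) \<Longrightarrow> inst \<sigma> l = inst \<sigma>' l"
  by (induction rule: is_level.induct) auto

section \<open>Parallel reduction\<close>

definition closed_sig :: "'c signature \<Rightarrow> bool" where
  "closed_sig \<Sigma> \<longleftrightarrow> (\<forall>c A M. \<Sigma> c = Some (A, M) \<longrightarrow> closed M)"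

inductive par :: "'c signature \<Rightarrow> 'c trm \<Rightarrow> 'c trm \<Rightarrow> bool" for \<Sigma> where
  par_Var: "par \<Sigma> (Var k n) (Var k n)"
| par_Cst: "par \<Sigma> (Cst c) (Cst c)"
| par_TypeS: "par \<Sigma> TypeS TypeS"
| par_KindS: "par \<Sigma> KindS KindS"
| par_App: "par \<Sigma> M M' \<Longrightarrow> par \<Sigma> N N' \<Longrightarrow> par \<Sigma> (App M N) (App M' N')"
| par_Lam: "par \<Sigma> A A' \<Longrightarrow> par \<Sigma> M M' \<Longrightarrow> par \<Sigma> (Lam k A M) (Lam k A' M')"
| par_Pi: "par \<Sigma> A A' \<Longrightarrow> par \<Sigma> M M' \<Longrightarrow> par \<Sigma> (Pi k A M) (Pi k A' M')"
| par_beta: "par \<Sigma> M M' \<Longrightarrow> par \<Sigma> N N' \<Longrightarrow> k = Ord \<or> is_level N \<Longrightarrow>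
    par \<Sigma> (App (Lam k A M) N) (subst k 0 N' M')"
| par_rw_u: "is_level i' \<Longrightarrow> is_level i \<Longrightarrow> par \<Sigma> (ElT i' (uT i)) (UT i)"
| par_rw_pi: "is_level i' \<Longrightarrow> is_level iA \<Longrightarrow> is_level iB \<Longrightarrow> par \<Sigma> A A' \<Longrightarrow> par \<Sigma> B B' \<Longrightarrow>
    par \<Sigma> (ElT i' (piT iA iB A B))
      (Pi Ord (ElT iA A') (ElT (lift Ord 0 iB) (App (lift Ord 0 B') (Var Ord 0))))"
| par_delta: "\<Sigma> c = Some (A, M) \<Longrightarrow> par \<Sigma> (Cst (CUser c)) M"

lemma par_refl: "par \<Sigma> M M"
  by (induction M) (auto intro: par.intros)

lemma step_imp_par: "step \<Sigma> M N \<Longrightarrow> par \<Sigma> M N"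
  by (induction rule: step.induct) (auto intro: par.intros par_refl)

lemma par_Cst_inv: "par \<Sigma> (Cst c) X \<Longrightarrow> (\<And>u. c \<noteq> CUser u) \<Longrightarrow> X = Cst c"
  by (erule par.cases) auto

lemma par_App_inv:
  "par \<Sigma> (App M N) X \<Longrightarrow> (\<And>k A B. M \<noteq> Lam k A B) \<Longrightarrow> (\<And>i'. M \<noteq> App (Cst CEl) i') \<Longrightarrow>
   \<exists>M' N'. X = App M' N' \<and> par \<Sigma> M M' \<and> par \<Sigma> N N'"
  by (erule par.cases) auto

lemma par_Lam_inv: "par \<Sigma> (Lam k A M) X \<Longrightarrow> \<exists>A' M'. X = Lam k A' M' \<and> par \<Sigma> A A' \<and> par \<Sigma> M M'"
  by (erule par.cases) auto

lemma par_level: "is_level l \<Longrightarrow> par \<Sigma> l l' \<Longrightarrow> l' = l"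
proof (induction arbitrary: l' rule: is_level.induct)
  case (lv_s l)
  then show ?case by (fastforce dest!: par_App_inv par_Cst_inv)
next
  case (lv_max l l'')
  then show ?case by (fastforce dest!: par_App_inv par_Cst_inv)
qed (auto elim: par.cases)

lemma par_El_inv: "par \<Sigma> (App (Cst CEl) i') X \<Longrightarrow> is_level i' \<Longrightarrow> X = App (Cst CEl) i'"
  using par_level by (fastforce dest!: par_App_inv par_Cst_inv)

lemma par_uT_inv: "par \<Sigma> (uT i) X \<Longrightarrow> is_level i \<Longrightarrow> X = uT i"
  using par_level by (fastforce dest!: par_App_inv par_Cst_inv)

lemma par_piT_inv:
  assumes "par \<Sigma> (piT iA iB A B) X" "is_level iA" "is_level iB"
  shows "\<exists>A' B'. X = piT iA iB A' B' \<and> par \<Sigma> A A' \<and> par \<Sigma> B B'"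
  using assms par_level by (fastforce dest!: par_App_inv par_Cst_inv)

lemma par_imp_steps: "par \<Sigma> M N \<Longrightarrow> (step \<Sigma>)\<^sup>*\<^sup>* M N"
proof (induction rule: par.induct)
  case (par_App M M' N N')
  show ?case using par_App.IH by (rule rtranclp_cong2) (auto intro: step.app1 step.app2)
next
  case (par_Lam A A' M M' k)
  show ?case using par_Lam.IH by (rule rtranclp_cong2) (auto intro: step.lam1 step.lam2)
next
  case (par_Pi A A' M M' k)
  show ?case using par_Pi.IH by (rule rtranclp_cong2) (auto intro: step.pi1 step.pi2)
next
  case (par_beta M M' N N' k A)
  have "(step \<Sigma>)\<^sup>*\<^sup>* (Lam k A M) (Lam k A M')"
    using par_beta.IH(1) by (rule rtranclp_cong2) (auto intro: step.lam1 step.lam2)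
  then have "(step \<Sigma>)\<^sup>*\<^sup>* (App (Lam k A M) N) (App (Lam k A M') N')"
    using par_beta.IH(2) by (rule rtranclp_cong2) (auto intro: step.app1 step.app2)
  moreover have "k = Ord \<or> is_level N'"
    using par_beta par_level by metis
  ultimately show ?case by (auto intro: step.beta rtranclp.rtrancl_into_rtrancl)
next
  case (par_rw_pi i' iA iB A A' B B')
  have "(step \<Sigma>)\<^sup>*\<^sup>* (piT iA iB A B) (piT iA iB A' B')"
    using par_rw_pi.IH by (rule rtranclp_cong2) (auto intro: step.app1 step.app2)
  then have "(step \<Sigma>)\<^sup>*\<^sup>* (ElT i' (piT iA iB A B)) (ElT i' (piT iA iB A' B'))"
    by (rule rtranclp_cong2[OF rtranclp.rtrancl_refl]) (auto intro: step.app1 step.app2)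
  with par_rw_pi show ?case by (auto intro: step.rw_pi rtranclp.rtrancl_into_rtrancl)
qed (auto intro: step.intros)

lemma rtranclp_par_eq_rtranclp_step: "(par \<Sigma>)\<^sup>*\<^sup>* = (step \<Sigma>)\<^sup>*\<^sup>*"
  using step_imp_par par_imp_steps by (blast intro: rtranclp_subset)

lemma par_ren: "par \<Sigma> M M' \<Longrightarrow> closed_sig \<Sigma> \<Longrightarrow> par \<Sigma> (ren \<xi> M) (ren \<xi> M')"
proof (induction arbitrary: \<xi> rule: par.induct)
  case (par_beta M M' N N' k A)
  then show ?case by (auto simp: ren_subst0 is_level_ren intro!: par.par_beta)
next
  case (par_rw_u i' i)
  then show ?case by (auto simp: is_level_ren intro!: par.par_rw_u[simplified])
next
  case (par_rw_pi i' iA iB A A' B B')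
  then show ?case
    using par.par_rw_pi[of "ren \<xi> i'" "ren \<xi> iA" "ren \<xi> iB" \<Sigma> "ren \<xi> A" "ren \<xi> A'" "ren \<xi> B" "ren \<xi> B'"]
    by (auto simp: is_level_ren ren_lift0 up_ren_def)
next
  case (par_delta c A M)
  then show ?case by (auto simp: closed_sig_def closed_ren intro: par.par_delta)
qed (auto intro: par.intros)

lemma par_lift: "par \<Sigma> M M' \<Longrightarrow> closed_sig \<Sigma> \<Longrightarrow> par \<Sigma> (lift k d M) (lift k d M')"
  by (simp add: lift_eq_ren par_ren)

lemma par_up_inst:
  "closed_sig \<Sigma> \<Longrightarrow> \<forall>k n. par \<Sigma> (\<sigma> k n) (\<sigma>' k n) \<Longrightarrow> \<forall>k' n. par \<Sigma> (up_inst k \<sigma> k' n) (up_inst k \<sigma>' k' n)"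
  by (auto simp: up_inst_def par_lift intro: par.intros split: nat.split)

text \<open>Level variables may only be instantiated by levels, and levels are par-normal, so two
  par-related level-respecting substitutions agree on level variables.\<close>

lemma par_inst:
  "par \<Sigma> M M' \<Longrightarrow> closed_sig \<Sigma> \<Longrightarrow> \<forall>k n. par \<Sigma> (\<sigma> k n) (\<sigma>' k n) \<Longrightarrow> respects_levels \<sigma> \<Longrightarrow>
   par \<Sigma> (inst \<sigma> M) (inst \<sigma>' M')"
proof (induction arbitrary: \<sigma> \<sigma>' rule: par.induct)
  case (par_Lam A A' M M' k)
  then show ?case by (simp add: par.par_Lam par_up_inst respects_levels_up_inst)
next
  case (par_Pi A A' M M' k)
  then show ?case by (simp add: par.par_Pi par_up_inst respects_levels_up_inst)
next
  case (par_beta M M' N N' k A)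
  then show ?case
    by (auto simp: inst_subst0 is_level_inst par_up_inst respects_levels_up_inst intro!: par.par_beta)
next
  case (par_rw_u i' i)
  have "\<sigma> Lev n = \<sigma>' Lev n" for n
    using par_rw_u.prems par_level by (metis respects_levels_def)
  with par_rw_u show ?case
    by (auto simp: is_level_inst inst_level_cong[of i \<sigma>' \<sigma>] intro!: par.par_rw_u[simplified])
next
  case (par_rw_pi i' iA iB A A' B B')
  have "\<sigma> Lev n = \<sigma>' Lev n" for n
    using par_rw_pi.prems par_level by (metis respects_levels_def)
  then have "inst \<sigma>' iA = inst \<sigma> iA" "inst \<sigma>' iB = inst \<sigma> iB"
    using par_rw_pi.hyps by (metis inst_level_cong)+
  with par_rw_pi show ?case
    using par.par_rw_pi[of "inst \<sigma> i'" "inst \<sigma> iA" "inst \<sigma> iB" \<Sigma> "inst \<sigma> A" "inst \<sigma>' A'" "inst \<sigma> B" "inst \<sigma>' B'"]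
    by (auto simp: is_level_inst inst_lift0 up_inst_def)
next
  case (par_delta c A M)
  then show ?case by (auto simp: closed_sig_def closed_inst intro: par.par_delta)
qed (auto intro: par.intros)

lemma par_subst0:
  "par \<Sigma> M M' \<Longrightarrow> par \<Sigma> N N' \<Longrightarrow> closed_sig \<Sigma> \<Longrightarrow> k = Ord \<or> is_level N \<Longrightarrow>
   par \<Sigma> (subst k 0 N M) (subst k 0 N' M')"
  unfolding subst_eq_inst
  by (rule par_inst) (auto simp: subst_at_def respects_levels_subst_at intro: par.intros)

section \<open>Complete development and confluence\<close>

fun match_Lam :: "'c trm \<Rightarrow> (vkind \<times> 'c trm \<times> 'c trm) option" where
  "match_Lam (Lam k A B) = Some (k, A, B)"
| "match_Lam _ = None"

fun match_El :: "'c trm \<Rightarrow> 'c trm option" where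
  "match_El (App (Cst c) i) = (if c = CEl \<and> is_level i then Some i else None)"
| "match_El _ = None"

fun match_u :: "'c trm \<Rightarrow> 'c trm option" where
  "match_u (App (Cst c) i) = (if c = Cu \<and> is_level i then Some i else None)"
| "match_u _ = None"

fun match_pi :: "'c trm \<Rightarrow> ('c trm \<times> 'c trm \<times> 'c trm \<times> 'c trm) option" where
  "match_pi (App (App (App (App (Cst c) iA) iB) A) B) =
     (if c = Cpi \<and> is_level iA \<and> is_level iB then Some (iA, iB, A, B) else None)"
| "match_pi _ = None"

lemma match_Lam_Some: "match_Lam M = Some (k, A, B) \<longleftrightarrow> M = Lam k A B"
  by (cases M rule: match_Lam.cases) auto

lemma match_El_Some: "match_El M = Some i \<longleftrightarrow> M = App (Cst CEl) i \<and> is_level i"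
  by (cases M rule: match_El.cases) auto

lemma match_u_Some: "match_u M = Some i \<longleftrightarrow> M = uT i \<and> is_level i"
  by (cases M rule: match_u.cases) auto

lemma match_pi_Some:
  "match_pi M = Some (iA, iB, A, B) \<longleftrightarrow> M = piT iA iB A B \<and> is_level iA \<and> is_level iB"
  by (cases M rule: match_pi.cases) auto

text \<open>Redexes are recognised through the \<open>match_\<close> functions because their level side
  conditions cannot be expressed as patterns.\<close>

function dev :: "'c signature \<Rightarrow> 'c trm \<Rightarrow> 'c trm" where
  "dev \<Sigma> (Var k n) = Var k n"
| "dev \<Sigma> (Cst c) =
     (case c of CUser u \<Rightarrow> (case \<Sigma> u of Some (A, M) \<Rightarrow> M | None \<Rightarrow> Cst c) | _ \<Rightarrow> Cst c)"
| "dev \<Sigma> (App M N) = (case match_Lam M of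
     Some (k, A, B) \<Rightarrow>
       (if k = Ord \<or> is_level N then subst k 0 (dev \<Sigma> N) (dev \<Sigma> B) else App (dev \<Sigma> M) (dev \<Sigma> N))
   | None \<Rightarrow> (case match_El M of
       Some i' \<Rightarrow> (case match_u N of
           Some i \<Rightarrow> UT i
         | None \<Rightarrow> (case match_pi N of
             Some (iA, iB, A, B) \<Rightarrow>
               Pi Ord (ElT iA (dev \<Sigma> A)) (ElT (lift Ord 0 iB) (App (lift Ord 0 (dev \<Sigma> B)) (Var Ord 0)))
           | None \<Rightarrow> App (dev \<Sigma> M) (dev \<Sigma> N)))
     | None \<Rightarrow> App (dev \<Sigma> M) (dev \<Sigma> N)))"
| "dev \<Sigma> (Lam k A M) = Lam k (dev \<Sigma> A) (dev \<Sigma> M)"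
| "dev \<Sigma> (Pi k A M) = Pi k (dev \<Sigma> A) (dev \<Sigma> M)"
| "dev \<Sigma> TypeS = TypeS"
| "dev \<Sigma> KindS = KindS"
  by pat_completeness auto
termination
  by (relation "measure (\<lambda>(\<Sigma>, M). size M)") (auto simp: match_Lam_Some match_pi_Some)

lemma dev_level: "is_level l \<Longrightarrow> dev \<Sigma> l = l"
  by (induction rule: is_level.induct) auto

lemma dev_App_cases:
  obtains (beta) k A B where "M = Lam k A B" "k = Ord \<or> is_level N"
  | (rw_u) i' i where "M = App (Cst CEl) i'" "N = uT i" "is_level i'" "is_level i"
  | (rw_pi) i' iA iB A B
      where "M = App (Cst CEl) i'" "N = piT iA iB A B" "is_level i'" "is_level iA" "is_level iB"
  | (cong) "dev \<Sigma> (App M N) = App (dev \<Sigma> M) (dev \<Sigma> N)"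
proof -
  have "dev \<Sigma> (App M N) = App (dev \<Sigma> M) (dev \<Sigma> N)"
    if "\<nexists>k A B. M = Lam k A B \<and> (k = Ord \<or> is_level N)"
      and "\<nexists>i' i. M = App (Cst CEl) i' \<and> N = uT i \<and> is_level i' \<and> is_level i"
      and "\<nexists>i' iA iB A B. M = App (Cst CEl) i' \<and> N = piT iA iB A B \<and>
             is_level i' \<and> is_level iA \<and> is_level iB"
    using that
    by (cases "match_Lam M"; cases "match_El M"; cases "match_u N"; cases "match_pi N")
       (auto simp: match_Lam_Some match_El_Some match_u_Some match_pi_Some)
  with that show thesis by blast
qed

lemma par_dev_App:
  assumes "par \<Sigma> M M'" "par \<Sigma> N N'" "par \<Sigma> M' (dev \<Sigma> M)" "par \<Sigma> N' (dev \<Sigma> N)"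
  shows "par \<Sigma> (App M' N') (dev \<Sigma> (App M N))"
proof (cases rule: dev_App_cases[where M = M and N = N and \<Sigma> = \<Sigma>])
  case (beta k A B)
  obtain A' B' where M': "M' = Lam k A' B'"
    using par_Lam_inv assms(1) beta by blast
  then have "par \<Sigma> B' (dev \<Sigma> B)"
    using assms(3) beta par_Lam_inv by fastforce
  moreover have "k = Ord \<or> is_level N'"
    using beta assms(2) par_level by metis
  ultimately show ?thesis
    using assms(4) beta M' by (auto intro!: par.par_beta)
next
  case (rw_u i' i)
  then have "M' = M" "N' = N"
    using assms(1,2) par_El_inv par_uT_inv by metis+
  with rw_u show ?thesis by (auto intro: par.intros)
next
  case (rw_pi i' iA iB A B)
  have M': "M' = M"
    using rw_pi assms(1) par_El_inv by metis
  obtain A' B' where N': "N' = piT iA iB A' B'"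
    using par_piT_inv assms(2) rw_pi by metis
  have "par \<Sigma> (piT iA iB A' B') (piT iA iB (dev \<Sigma> A) (dev \<Sigma> B))"
    using assms(4) N' rw_pi by (simp add: dev_level)
  then have "par \<Sigma> A' (dev \<Sigma> A)" "par \<Sigma> B' (dev \<Sigma> B)"
    using par_piT_inv rw_pi by fastforce+
  with M' N' rw_pi show ?thesis by (auto intro!: par.par_rw_pi)
next
  case cong
  with assms(3,4) show ?thesis by (auto intro: par.intros)
qed

lemma par_dev: "par \<Sigma> M N \<Longrightarrow> closed_sig \<Sigma> \<Longrightarrow> par \<Sigma> N (dev \<Sigma> M)"
proof (induction rule: par.induct)
  case (par_Cst c)
  then show ?case by (auto intro: par.intros split: const.split option.split)
next
  case (par_App M M' N N')
  show ?case
    by (rule par_dev_App) (use par_App in auto)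
next
  case (par_beta M M' N N' k A)
  then have "k = Ord \<or> is_level N'"
    using par_level by metis
  with par_beta show ?case by (auto intro!: par_subst0)
next
  case (par_rw_pi i' iA iB A A' B B')
  then show ?case by (auto intro!: par.intros par_lift par_refl)
qed (auto intro: par.intros par_refl)

lemma confluentp_step: "closed_sig \<Sigma> \<Longrightarrow> confluentp (step \<Sigma>)"
proof -
  assume "closed_sig \<Sigma>"
  then have "strong_confluentp (par \<Sigma>)"
    by (intro strong_confluentpI) (meson par_dev r_into_rtranclp rtranclp.rtrancl_refl sup2CI)
  then have "confluentp (par \<Sigma>)"
    by (rule strong_confluentp_imp_confluentp)
  then show ?thesis
    unfolding confluentp_def rtranclp_conversep rtranclp_par_eq_rtranclp_step .
qed

section \<open>Level equality commutes with reduction\<close>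

text \<open>A syntax-directed characterisation of \<open>leveq\<close>: a structural congruence which
  relates two terms at the root only if both are level expressions.\<close>

inductive leveq_at_levels :: "'c trm \<Rightarrow> 'c trm \<Rightarrow> bool" where
  lal_Var: "leveq_at_levels (Var k n) (Var k n)"
| lal_Cst: "leveq_at_levels (Cst c) (Cst c)"
| lal_TypeS: "leveq_at_levels TypeS TypeS"
| lal_KindS: "leveq_at_levels KindS KindS"
| lal_App: "leveq_at_levels M M' \<Longrightarrow> leveq_at_levels N N' \<Longrightarrow> leveq_at_levels (App M N) (App M' N')"
| lal_Lam: "leveq_at_levels A A' \<Longrightarrow> leveq_at_levels M M' \<Longrightarrow> leveq_at_levels (Lam k A M) (Lam k A' M')"
| lal_Pi: "leveq_at_levels A A' \<Longrightarrow> leveq_at_levels M M' \<Longrightarrow> leveq_at_levels (Pi k A M) (Pi k A' M')"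
| lal_level: "is_level l \<Longrightarrow> is_level l' \<Longrightarrow> leveq l l' \<Longrightarrow> leveq_at_levels l l'"

lemma leveq_at_levels_refl: "leveq_at_levels M M"
  by (induction M) (auto intro: leveq_at_levels.intros)

lemma leveq_at_levels_sym: "leveq_at_levels M N \<Longrightarrow> leveq_at_levels N M"
  by (induction rule: leveq_at_levels.induct) (auto intro: leveq_at_levels.intros leveq.sym)

lemma leveq_at_levels_imp_leveq: "leveq_at_levels M N \<Longrightarrow> leveq M N"
  by (induction rule: leveq_at_levels.induct) (auto intro: leveq.intros)

lemma leveq_lift: "leveq M N \<Longrightarrow> leveq (lift k d M) (lift k d N)"
proof (induction arbitrary: k d rule: leveq.induct)
  case (subst_cl M N k0 P d0)
  then show ?case
    unfolding lift_subst by (auto intro!: leveq.subst_cl simp: is_level_lift)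
next
  case (trans M N P)
  then show ?case by (blast intro: leveq.trans)
qed (auto intro: leveq.intros simp: is_level_lift)

lemma leveq_at_levels_Cst_inv: "leveq_at_levels (Cst c) X \<Longrightarrow> c \<noteq> Cz \<Longrightarrow> X = Cst c"
  by (erule leveq_at_levels.cases) auto

lemma leveq_at_levels_App_inv:
  "leveq_at_levels (App M N) X \<Longrightarrow>
   (\<exists>M' N'. X = App M' N' \<and> leveq_at_levels M M' \<and> leveq_at_levels N N') \<or>
   (is_level (App M N) \<and> is_level X \<and> leveq (App M N) X)"
  by (erule leveq_at_levels.cases) auto

lemma leveq_at_levels_level:
  "is_level M \<Longrightarrow> leveq_at_levels M N \<Longrightarrow> is_level N \<and> leveq M N"
proof (induction arbitrary: N rule: is_level.induct)
  case (lv_s l)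
  from leveq_at_levels_App_inv[OF lv_s.prems] show ?case
  proof
    assume "\<exists>M' N'. N = App M' N' \<and> leveq_at_levels (Cst Cs) M' \<and> leveq_at_levels l N'"
    then obtain N' where "N = sL N'" "leveq_at_levels l N'"
      using leveq_at_levels_Cst_inv by blast
    with lv_s.IH show ?thesis by (auto intro: leveq.cong_app leveq.refl)
  qed auto
next
  case (lv_max l l')
  from leveq_at_levels_App_inv[OF lv_max.prems] show ?case
  proof
    assume "\<exists>M' N'. N = App M' N' \<and> leveq_at_levels (App (Cst Cmax) l) M' \<and> leveq_at_levels l' N'"
    then obtain M' N' where N: "N = App M' N'" "leveq_at_levels (App (Cst Cmax) l) M'" "leveq_at_levels l' N'"
      by blast
    from leveq_at_levels_App_inv[OF N(2)] obtain Y where "M' = App (Cst Cmax) Y" "leveq_at_levels l Y"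
      using leveq_at_levels_Cst_inv by auto
    with N lv_max.IH show ?thesis by (auto intro: leveq.cong_app leveq.refl)
  qed auto
qed (auto elim: leveq_at_levels.cases intro: leveq.refl)

lemma leveq_at_levels_level_right:
  "is_level N \<Longrightarrow> leveq_at_levels M N \<Longrightarrow> is_level M \<and> leveq M N"
  using leveq_at_levels_level leveq_at_levels_sym leveq.sym by metis

lemma leveq_at_levels_trans:
  "leveq_at_levels M N \<Longrightarrow> leveq_at_levels N P \<Longrightarrow> leveq_at_levels M P"
proof (induction arbitrary: P rule: leveq_at_levels.induct)
  case (lal_App M M' N N')
  show ?case
  proof (cases "is_level (App M' N')")
    case True
    then show ?thesis
      using lal_App.prems lal_App.hyps leveq_at_levels_level leveq_at_levels_level_right
      by (meson leveq.trans leveq_at_levels.lal_App leveq_at_levels.lal_level)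
  next
    case False
    then obtain P1 P2 where "P = App P1 P2" "leveq_at_levels M' P1" "leveq_at_levels N' P2"
      using leveq_at_levels_App_inv[OF lal_App.prems] by blast
    with lal_App.IH show ?thesis by (auto intro: leveq_at_levels.intros)
  qed
next
  case (lal_Lam A A' M M' k)
  from lal_Lam.prems show ?case
    by (cases rule: leveq_at_levels.cases) (auto intro: leveq_at_levels.intros lal_Lam.IH)
next
  case (lal_Pi A A' M M' k)
  from lal_Pi.prems show ?case
    by (cases rule: leveq_at_levels.cases) (auto intro: leveq_at_levels.intros lal_Pi.IH)
next
  case (lal_level l l')
  then show ?case
    using leveq_at_levels_level by (meson leveq.trans leveq_at_levels.lal_level)
qed auto

lemma leveq_at_levels_lift: "leveq_at_levels M N \<Longrightarrow> leveq_at_levels (lift k d M) (lift k d N)"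
  by (induction arbitrary: d rule: leveq_at_levels.induct)
     (auto intro: leveq_at_levels.intros simp: is_level_lift leveq_lift)

lemma leveq_subst_level: "is_level l \<Longrightarrow> leveq P P' \<Longrightarrow> leveq (subst k d P l) (subst k d P' l)"
  by (induction rule: is_level.induct) (auto intro: leveq.intros)

lemma leveq_at_levels_subst:
  "leveq_at_levels M M' \<Longrightarrow> leveq_at_levels P P' \<Longrightarrow> k = Ord \<or> is_level P \<Longrightarrow>
   leveq_at_levels (subst k d P M) (subst k d P' M')"
proof (induction arbitrary: d P P' rule: leveq_at_levels.induct)
  case (lal_Var k' n)
  then show ?case by (auto intro: leveq_at_levels.intros leveq_at_levels_refl)
next
  case (lal_Lam A A' M M' k')
  then show ?case
    using lal_Lam.IH(2)[OF leveq_at_levels_lift[OF lal_Lam.prems(1)]]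
    by (auto simp: is_level_lift intro: leveq_at_levels.lal_Lam)
next
  case (lal_Pi A A' M M' k')
  then show ?case
    using lal_Pi.IH(2)[OF leveq_at_levels_lift[OF lal_Pi.prems(1)]]
    by (auto simp: is_level_lift intro: leveq_at_levels.lal_Pi)
next
  case (lal_level l l')
  have P': "k = Ord \<or> is_level P'"
    using lal_level.prems leveq_at_levels_level by metis
  have "leveq (subst k d P l) (subst k d P l')"
    using lal_level by (auto intro: leveq.subst_cl)
  moreover have "leveq (subst k d P l') (subst k d P' l')"
    using lal_level leveq_subst_level leveq_at_levels_imp_leveq by metis
  ultimately show ?case
    using lal_level P' by (auto intro!: leveq_at_levels.lal_level is_level_subst intro: leveq.trans)
qed (auto intro: leveq_at_levels.intros)

lemma leveq_imp_leveq_at_levels: "leveq M N \<Longrightarrow> leveq_at_levels M N"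
proof (induction rule: leveq.induct)
  case (subst_cl M N k P d)
  then show ?case by (auto intro: leveq_at_levels_subst leveq_at_levels_refl)
qed (auto intro: leveq_at_levels.intros leveq.intros leveq_at_levels_refl
        leveq_at_levels_sym leveq_at_levels_trans)

lemma step_level_operator_inv: "step \<Sigma> (App (Cst c) l) X \<Longrightarrow> c = Cs \<or> c = Cmax \<Longrightarrow> \<exists>l'. X = App (Cst c) l' \<and> step \<Sigma> l l'"
  by (erule step.cases) (auto elim: step.cases)

lemma level_normal: "is_level l \<Longrightarrow> \<not> step \<Sigma> l l'"
proof (induction arbitrary: l' rule: is_level.induct)
  case (lv_s l)
  then show ?case by (auto dest!: step_level_operator_inv)
next
  case (lv_max l l'')
  show ?case
  proof
    assume "step \<Sigma> (l \<squnion>\<^sub>L l'') l'"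
    then show False
      by (cases rule: step.cases) (use lv_max.IH in \<open>auto dest!: step_level_operator_inv\<close>)
  qed
qed (auto elim: step.cases)

lemma leveq_at_levels_App_inv_right:
  "leveq_at_levels M (App X Y) \<Longrightarrow> \<not> is_level (App X Y) \<Longrightarrow>
   \<exists>X0 Y0. M = App X0 Y0 \<and> leveq_at_levels X0 X \<and> leveq_at_levels Y0 Y"
  by (erule leveq_at_levels.cases) auto

lemma leveq_at_levels_Lam_inv_right:
  "leveq_at_levels M (Lam k A B) \<Longrightarrow> \<exists>A0 B0. M = Lam k A0 B0 \<and> leveq_at_levels A0 A \<and> leveq_at_levels B0 B"
  by (erule leveq_at_levels.cases) auto

lemma leveq_at_levels_Pi_inv_right:
  "leveq_at_levels M (Pi k A B) \<Longrightarrow> \<exists>A0 B0. M = Pi k A0 B0 \<and> leveq_at_levels A0 A \<and> leveq_at_levels B0 B"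
  by (erule leveq_at_levels.cases) auto

lemma leveq_at_levels_Cst_inv_right: "leveq_at_levels M (Cst c) \<Longrightarrow> c \<noteq> Cz \<Longrightarrow> M = Cst c"
  by (erule leveq_at_levels.cases) auto

lemma leveq_at_levels_head_inv_right:
  assumes "leveq_at_levels M (App (Cst c) i)" "c \<noteq> Cz" "c \<noteq> Cs" "c \<noteq> Cmax" "is_level i"
  shows "\<exists>j. M = App (Cst c) j \<and> is_level j \<and> leveq_at_levels j i"
proof -
  obtain X j where "M = App X j" "leveq_at_levels X (Cst c)" "leveq_at_levels j i"
    using leveq_at_levels_App_inv_right[OF assms(1)] assms(3,4) by auto
  moreover have "X = Cst c"
    using calculation(2) assms(2) leveq_at_levels_Cst_inv_right by blast
  ultimately show ?thesis
    using assms(5) leveq_at_levels_level_right by blast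
qed

lemma leveq_at_levels_piT_inv_right:
  assumes "leveq_at_levels M (piT iA iB A B)" "is_level iA" "is_level iB"
  shows "\<exists>jA jB A0 B0. M = piT jA jB A0 B0 \<and> is_level jA \<and> is_level jB \<and>
           leveq_at_levels jA iA \<and> leveq_at_levels jB iB \<and>
           leveq_at_levels A0 A \<and> leveq_at_levels B0 B"
proof -
  obtain Y1 B0 where 1: "M = App Y1 B0" "leveq_at_levels Y1 (App (App (App (Cst Cpi) iA) iB) A)"
      "leveq_at_levels B0 B"
    using leveq_at_levels_App_inv_right[OF assms(1)] by auto
  obtain Y2 A0 where 2: "Y1 = App Y2 A0" "leveq_at_levels Y2 (App (App (Cst Cpi) iA) iB)"
      "leveq_at_levels A0 A"
    using leveq_at_levels_App_inv_right[OF 1(2)] by auto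
  obtain Y3 jB where 3: "Y2 = App Y3 jB" "leveq_at_levels Y3 (App (Cst Cpi) iA)" "leveq_at_levels jB iB"
    using leveq_at_levels_App_inv_right[OF 2(2)] by auto
  obtain jA where 4: "Y3 = App (Cst Cpi) jA" "is_level jA" "leveq_at_levels jA iA"
    using leveq_at_levels_head_inv_right[OF 3(2)] assms(2) by auto
  have "is_level jB"
    using 3(3) assms(3) leveq_at_levels_level_right by blast
  with 1 2 3 4 show ?thesis by blast
qed

lemma leveq_at_levels_beta_commute:
  assumes "leveq_at_levels M (App (Lam k A B) P)" "k = Ord \<or> is_level P"
  shows "\<exists>M'. step \<Sigma> M M' \<and> leveq_at_levels M' (subst k 0 P B)"
proof -
  obtain X0 P0 where 1: "M = App X0 P0" "leveq_at_levels X0 (Lam k A B)" "leveq_at_levels P0 P"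
    using leveq_at_levels_App_inv_right[OF assms(1)] by auto
  obtain A0 B0 where 2: "X0 = Lam k A0 B0" "leveq_at_levels B0 B"
    using leveq_at_levels_Lam_inv_right[OF 1(2)] by auto
  have "k = Ord \<or> is_level P0"
    using assms(2) 1(3) leveq_at_levels_level_right by metis
  with 1 2 show ?thesis
    by (auto intro!: step.beta leveq_at_levels_subst)
qed

lemma leveq_at_levels_rw_u_commute:
  assumes "leveq_at_levels M (ElT i' (uT i))" "is_level i'" "is_level i"
  shows "\<exists>M'. step \<Sigma> M M' \<and> leveq_at_levels M' (UT i)"
proof -
  obtain X0 Y0 where 1: "M = App X0 Y0" "leveq_at_levels X0 (App (Cst CEl) i')"
      "leveq_at_levels Y0 (uT i)"
    using leveq_at_levels_App_inv_right[OF assms(1)] by auto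
  obtain j' where "X0 = App (Cst CEl) j'" "is_level j'"
    using leveq_at_levels_head_inv_right[OF 1(2)] assms by auto
  moreover obtain j where "Y0 = uT j" "is_level j" "leveq_at_levels j i"
    using leveq_at_levels_head_inv_right[OF 1(3)] assms by auto
  ultimately show ?thesis
    using 1 by (auto intro!: step.rw_u leveq_at_levels.intros)
qed

lemma leveq_at_levels_rw_pi_commute:
  assumes "leveq_at_levels M (ElT i' (piT iA iB A B))" "is_level i'" "is_level iA" "is_level iB"
  shows "\<exists>M'. step \<Sigma> M M' \<and>
    leveq_at_levels M' (Pi Ord (ElT iA A) (ElT (lift Ord 0 iB) (App (lift Ord 0 B) (Var Ord 0))))"
proof -
  obtain X0 Y0 where 1: "M = App X0 Y0" "leveq_at_levels X0 (App (Cst CEl) i')"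
      "leveq_at_levels Y0 (piT iA iB A B)"
    using leveq_at_levels_App_inv_right[OF assms(1)] by auto
  obtain j' where "X0 = App (Cst CEl) j'" "is_level j'"
    using leveq_at_levels_head_inv_right[OF 1(2)] assms by auto
  moreover obtain jA jB A0 B0 where "Y0 = piT jA jB A0 B0" "is_level jA" "is_level jB"
      "leveq_at_levels jA iA" "leveq_at_levels jB iB" "leveq_at_levels A0 A" "leveq_at_levels B0 B"
    using leveq_at_levels_piT_inv_right[OF 1(3)] assms by blast
  ultimately show ?thesis
    using 1 by (auto intro!: step.rw_pi leveq_at_levels.intros leveq_at_levels_lift leveq_at_levels_refl)
qed

lemma leveq_at_levels_step_commute:
  "step \<Sigma> N N' \<Longrightarrow> leveq_at_levels M N \<Longrightarrow> \<exists>M'. step \<Sigma> M M' \<and> leveq_at_levels M' N'"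
proof (induction arbitrary: M rule: step.induct)
  case (beta k P A B)
  show ?case
    using beta.prems beta.hyps by (rule leveq_at_levels_beta_commute)
next
  case (rw_u i' i)
  then show ?case by (intro leveq_at_levels_rw_u_commute)
next
  case (rw_pi i' iA iB A B)
  then show ?case by (intro leveq_at_levels_rw_pi_commute)
next
  case (delta c A M0)
  then show ?case
    using leveq_at_levels_Cst_inv_right by (blast intro: step.delta leveq_at_levels_refl)
next
  case (app1 X X' Y)
  then have "\<not> is_level (App X Y)"
    using level_normal step.app1 by metis
  with app1 obtain X0 Y0 where "M = App X0 Y0" "leveq_at_levels X0 X" "leveq_at_levels Y0 Y"
    using leveq_at_levels_App_inv_right by blast
  with app1.IH show ?case by (blast intro: step.app1 leveq_at_levels.intros)
next
  case (app2 Y Y' X)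
  then have "\<not> is_level (App X Y)"
    using level_normal step.app2 by metis
  with app2 obtain X0 Y0 where "M = App X0 Y0" "leveq_at_levels X0 X" "leveq_at_levels Y0 Y"
    using leveq_at_levels_App_inv_right by blast
  with app2.IH show ?case by (blast intro: step.app2 leveq_at_levels.intros)
next
  case (lam1 A A' k B)
  then obtain A0 B0 where "M = Lam k A0 B0" "leveq_at_levels A0 A" "leveq_at_levels B0 B"
    using leveq_at_levels_Lam_inv_right by blast
  with lam1.IH show ?case by (blast intro: step.lam1 leveq_at_levels.intros)
next
  case (lam2 B B' k A)
  then obtain A0 B0 where "M = Lam k A0 B0" "leveq_at_levels A0 A" "leveq_at_levels B0 B"
    using leveq_at_levels_Lam_inv_right by blast
  with lam2.IH show ?case by (blast intro: step.lam2 leveq_at_levels.intros)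
next
  case (pi1 A A' k B)
  then obtain A0 B0 where "M = Pi k A0 B0" "leveq_at_levels A0 A" "leveq_at_levels B0 B"
    using leveq_at_levels_Pi_inv_right by blast
  with pi1.IH show ?case by (blast intro: step.pi1 leveq_at_levels.intros)
next
  case (pi2 B B' k A)
  then obtain A0 B0 where "M = Pi k A0 B0" "leveq_at_levels A0 A" "leveq_at_levels B0 B"
    using leveq_at_levels_Pi_inv_right by blast
  with pi2.IH show ?case by (blast intro: step.pi2 leveq_at_levels.intros)
qed

lemma leveq_step_commute: "leveq M N \<Longrightarrow> step \<Sigma> N N' \<Longrightarrow> \<exists>M'. step \<Sigma> M M' \<and> leveq M' N'"
  using leveq_at_levels_step_commute leveq_imp_leveq_at_levels leveq_at_levels_imp_leveq by metis

lemma leveq_steps_commute: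
  "(step \<Sigma>)\<^sup>*\<^sup>* N N' \<Longrightarrow> leveq M N \<Longrightarrow> \<exists>M'. (step \<Sigma>)\<^sup>*\<^sup>* M M' \<and> leveq M' N'"
proof (induction arbitrary: M rule: rtranclp_induct)
  case (step Q Q')
  then obtain M1 where "(step \<Sigma>)\<^sup>*\<^sup>* M M1" "leveq M1 Q"
    by blast
  moreover obtain M2 where "step \<Sigma> M1 M2" "leveq M2 Q'"
    using leveq_step_commute calculation(2) step.hyps(2) by metis
  ultimately show ?case by (meson rtranclp.rtrancl_into_rtrancl)
qed blast

lemma conv_imp_joinable_mod_leveq:
  assumes confl: "confluentp (step \<Sigma>)" and "conv \<Sigma> M N"
  shows "\<exists>M' N'. (step \<Sigma>)\<^sup>*\<^sup>* M M' \<and> (step \<Sigma>)\<^sup>*\<^sup>* N N' \<and> leveq M' N'"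
proof -
  from \<open>conv \<Sigma> M N\<close> have "(symclp (\<lambda>M N. step \<Sigma> M N \<or> leveq M N))\<^sup>*\<^sup>* M N"
    by (simp add: conv_def equivclp_def)
  then show ?thesis
  proof (induction rule: rtranclp_induct)
    case base
    then show ?case by (blast intro: leveq.refl)
  next
    case (step N P)
    then obtain M' N' where M': "(step \<Sigma>)\<^sup>*\<^sup>* M M'" and N': "(step \<Sigma>)\<^sup>*\<^sup>* N N'" and "leveq M' N'"
      by blast
    from step.hyps(2) consider "step \<Sigma> N P" | "step \<Sigma> P N" | "leveq P N"
      by (auto simp: symclp_def intro: leveq.sym)
    then show ?case
    proof cases
      case 1
      then obtain Q where "(step \<Sigma>)\<^sup>*\<^sup>* N' Q" "(step \<Sigma>)\<^sup>*\<^sup>* P Q"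
        using confluentpD[OF confl N'] by blast
      moreover obtain M'' where "(step \<Sigma>)\<^sup>*\<^sup>* M' M''" "leveq M'' Q"
        using leveq_steps_commute \<open>leveq M' N'\<close> calculation(1) by blast
      ultimately show ?thesis
        using M' by (meson rtranclp_trans)
    next
      case 2
      with M' N' \<open>leveq M' N'\<close> show ?thesis
        by (meson converse_rtranclp_into_rtranclp)
    next
      case 3
      then obtain P' where "(step \<Sigma>)\<^sup>*\<^sup>* P P'" "leveq P' N'"
        using leveq_steps_commute N' by blast
      with M' \<open>leveq M' N'\<close> show ?thesis
        by (meson leveq.sym leveq.trans)
    qed
  qed
qed

theorem mainTheorem3:
  fixes \<Sigma> :: "'c signature"
  assumes closed_defs: "\<And>c A M. \<Sigma> c = Some (A, M) \<Longrightarrow> closed M"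
  shows "confluentp (step \<Sigma>)
    \<and> (\<forall>M N N'. leveq M N \<and> step \<Sigma> N N' \<longrightarrow> (\<exists>M'. step \<Sigma> M M' \<and> leveq M' N'))
    \<and> (\<forall>M N. conv \<Sigma> M N \<longrightarrow>
           (\<exists>M' N'. (step \<Sigma>)\<^sup>*\<^sup>* M M' \<and> (step \<Sigma>)\<^sup>*\<^sup>* N N' \<and> leveq M' N'))"
proof -
  have "closed_sig \<Sigma>"
    using closed_defs by (auto simp: closed_sig_def)
  then have "confluentp (step \<Sigma>)"
    by (rule confluentp_step)
  then show ?thesis
    using leveq_step_commute conv_imp_joinable_mod_leveq by blast
qed

end
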